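(* Let $G$ be a group, $\{W_n\}$ a $C$-filling sequence of finite subsets of $G$, and $E\subseteq G$ finite. Suppose that for each $f\in E$ there is an index $n(f)$ such that $\frac{1}{|W_{n(f)}|}|W_{n(f)}f\cap E|\le\alpha$. Then \[ \frac{|E|}{|\bigcup_{f\in E}W_{n(f)}f|}\le\frac{\alpha}{C}. \]
   Context: A sequence $\{W_{n(i)}f_i\}_{i=1}^I$ of right translates is incremental if $n(1)\ge\dots\ge n(I)$ and $f_i\notin\bigcup_{j<i}W_{n(j)}f_j$ for each $i$. A sequence $\{W_n\}$ of finite subsets with $1_G\in W_n$ for all $n$ is $C$-filling if for every incremental sequence $|\bigcup_iW_{n(i)}f_i|\ge C\sum_i|W_{n(i)}f_i|$. *)

theory Defs
  imports Complex_Main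
begin

text \<open>Groups are rendered via the type class group_add (not necessarily commutative);
  the group operation is written +, the identity 1_G is 0.\<close>

definition rtrans :: "'a::group_add set \<Rightarrow> 'a \<Rightarrow> 'a set" where
  "rtrans W f = (\<lambda>w. w + f) ` W"

definition incremental :: "(nat \<Rightarrow> 'a::group_add set) \<Rightarrow> nat \<Rightarrow> (nat \<Rightarrow> nat) \<Rightarrow> (nat \<Rightarrow> 'a) \<Rightarrow> bool" where
  "incremental W I nidx fidx \<longleftrightarrow>
     (\<forall>i j. i \<le> j \<longrightarrow> j < I \<longrightarrow> nidx j \<le> nidx i) \<and>
     (\<forall>i < I. fidx i \<notin> (\<Union>j<i. rtrans (W (nidx j)) (fidx j)))"

definition C_filling :: "(nat \<Rightarrow> 'a::group_add set) \<Rightarrow> real \<Rightarrow> bool" where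
  "C_filling W C \<longleftrightarrow>
     (\<forall>n. finite (W n) \<and> 0 \<in> W n) \<and>
     (\<forall>I nidx fidx. incremental W I nidx fidx \<longrightarrow>
        real (card (\<Union>i<I. rtrans (W (nidx i)) (fidx i)))
          \<ge> C * (\<Sum>i<I. real (card (rtrans (W (nidx i)) (fidx i)))))"

end

theory Submission
  imports Defs
begin

text \<open>Greedy selection: run through E in order of decreasing n(f), keeping f whenever it is not
  covered by the translates kept so far. Because 1_G lies in every W_m, the kept translates
  W_{n(f_i)} f_i form an incremental sequence covering E, so
  |E| \<le> \<Sum>_i |W_{n(f_i)} f_i \<inter> E| \<le> \<alpha> \<Sum>_i |W_{n(f_i)} f_i|, and the filling property bounds the last
  sum by |\<Union>_i W_{n(f_i)} f_i| / C \<le> |\<Union>_{f\<in>E} W_{n(f)} f| / C.\<close>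

lemma card_rtrans: "card (rtrans W f) = card W"
  unfolding rtrans_def by (rule card_image) (auto simp: inj_on_def)

lemma finite_rtrans: "finite W \<Longrightarrow> finite (rtrans W f)"
  unfolding rtrans_def by simp

lemma rtrans_self_mem: "0 \<in> W \<Longrightarrow> f \<in> rtrans W f"
  unfolding rtrans_def by force

lemma incremental_snoc:
  assumes inc: "incremental W I nidx fidx"
    and le: "\<forall>i<I. m \<le> nidx i"
    and new: "f \<notin> (\<Union>i<I. rtrans (W (nidx i)) (fidx i))"
  shows "incremental W (Suc I) (nidx(I := m)) (fidx(I := f))"
  unfolding incremental_def
proof (intro conjI allI impI)
  fix i j assume "i \<le> j" "j < Suc I"
  then show "(nidx(I := m)) j \<le> (nidx(I := m)) i"
    using inc le unfolding incremental_def by (cases "j = I"; cases "i = I") auto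
next
  fix i assume "i < Suc I"
  then consider "i = I" | "i < I" by linarith
  then show "(fidx(I := f)) i \<notin> (\<Union>j<i. rtrans (W ((nidx(I := m)) j)) ((fidx(I := f)) j))"
    using inc new unfolding incremental_def by cases auto
qed

lemma incremental_cover_of_sorted_list:
  fixes W :: "nat \<Rightarrow> 'a::group_add set"
  assumes W0: "\<forall>m. 0 \<in> W m"
    and "sorted_wrt (\<lambda>a b. n b \<le> n a) xs"
  shows "\<exists>I nidx fidx. incremental W I nidx fidx
           \<and> (\<forall>i<I. fidx i \<in> set xs \<and> nidx i = n (fidx i))
           \<and> set xs \<subseteq> (\<Union>i<I. rtrans (W (nidx i)) (fidx i))"
  using assms(2)
proof (induction xs rule: rev_induct)
  case Nil
  show ?case by (rule exI[of _ 0]) (auto simp: incremental_def)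
next
  case (snoc x xs)
  have "sorted_wrt (\<lambda>a b. n b \<le> n a) xs" and le: "\<forall>y\<in>set xs. n x \<le> n y"
    using snoc.prems by (auto simp: sorted_wrt_append)
  then obtain I nidx fidx where inc: "incremental W I nidx fidx"
    and sel: "\<forall>i<I. fidx i \<in> set xs \<and> nidx i = n (fidx i)"
    and cov: "set xs \<subseteq> (\<Union>i<I. rtrans (W (nidx i)) (fidx i))"
    using snoc.IH by blast
  show ?case
  proof (cases "x \<in> (\<Union>i<I. rtrans (W (nidx i)) (fidx i))")
    case True
    then show ?thesis using inc sel cov by (intro exI[of _ I] exI[of _ nidx] exI[of _ fidx]) auto
  next
    case False
    let ?nidx = "nidx(I := n x)" and ?fidx = "fidx(I := x)"
    have "incremental W (Suc I) ?nidx ?fidx"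
      using incremental_snoc[OF inc _ False] sel le by auto
    moreover have "\<forall>i<Suc I. ?fidx i \<in> set (xs @ [x]) \<and> ?nidx i = n (?fidx i)"
      using sel by (auto simp: less_Suc_eq)
    moreover have "set (xs @ [x]) \<subseteq> (\<Union>i<Suc I. rtrans (W (?nidx i)) (?fidx i))"
    proof -
      have "x \<in> rtrans (W (?nidx I)) (?fidx I)"
        using W0 by (simp add: rtrans_self_mem)
      moreover have "(\<Union>i<I. rtrans (W (nidx i)) (fidx i))
                       \<subseteq> (\<Union>i<Suc I. rtrans (W (?nidx i)) (?fidx i))"
        by (force simp: less_Suc_eq)
      ultimately show ?thesis using cov by auto
    qed
    ultimately show ?thesis by blast
  qed
qed

lemma incremental_cover:
  fixes W :: "nat \<Rightarrow> 'a::group_add set"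
  assumes "\<forall>m. 0 \<in> W m" and "finite E"
  obtains I nidx fidx where "incremental W I nidx fidx"
    and "\<forall>i<I. fidx i \<in> E \<and> nidx i = n (fidx i)"
    and "E \<subseteq> (\<Union>i<I. rtrans (W (nidx i)) (fidx i))"
proof -
  obtain ys where ys: "set ys = E" using finite_list[OF assms(2)] by blast
  have "sorted_wrt (\<lambda>a b. n b \<le> n a) (rev (sort_key n ys))"
    using sorted_sort_key[of n ys] by (simp add: sorted_wrt_rev sorted_map)
  from incremental_cover_of_sorted_list[OF assms(1) this] ys
  show ?thesis using that by auto
qed

lemma card_le_density_sum:
  assumes "finite I" and "finite E" and cov: "E \<subseteq> (\<Union>i\<in>I. A i)"
    and dens: "\<And>i. i \<in> I \<Longrightarrow> real (card (A i \<inter> E)) \<le> \<alpha> * real (card (A i))"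
  shows "real (card E) \<le> \<alpha> * (\<Sum>i\<in>I. real (card (A i)))"
proof -
  have "E = (\<Union>i\<in>I. A i \<inter> E)" using cov by auto
  then have "card E \<le> (\<Sum>i\<in>I. card (A i \<inter> E))"
    by (metis card_UN_le \<open>finite I\<close>)
  then have "real (card E) \<le> (\<Sum>i\<in>I. real (card (A i \<inter> E)))"
    by (metis of_nat_le_iff of_nat_sum)
  also have "\<dots> \<le> (\<Sum>i\<in>I. \<alpha> * real (card (A i)))"
    by (rule sum_mono) (rule dens)
  finally show ?thesis by (simp add: sum_distrib_left)
qed

lemma C_filling_card_pos: "C_filling W C \<Longrightarrow> 0 < card (W m)"
  unfolding C_filling_def by (metis card_gt_0_iff empty_iff)

lemma card_le_filling_union:
  assumes "C_filling W C" and "0 < C" and "0 \<le> \<alpha>"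
    and inc: "incremental W I nidx fidx" and "finite E"
    and cov: "E \<subseteq> (\<Union>i<I. rtrans (W (nidx i)) (fidx i))"
    and dens: "\<And>i. i < I \<Longrightarrow>
      real (card (rtrans (W (nidx i)) (fidx i) \<inter> E)) \<le> \<alpha> * real (card (W (nidx i)))"
  shows "C * real (card E) \<le> \<alpha> * real (card (\<Union>i<I. rtrans (W (nidx i)) (fidx i)))"
proof -
  let ?S = "\<Sum>i<I. real (card (rtrans (W (nidx i)) (fidx i)))"
  have "real (card E) \<le> \<alpha> * ?S"
    using card_le_density_sum[OF _ \<open>finite E\<close> cov] dens by (simp add: card_rtrans)
  then have "C * real (card E) \<le> \<alpha> * (C * ?S)"
    using \<open>0 < C\<close> by (simp add: algebra_simps)
  also have "\<dots> \<le> \<alpha> * real (card (\<Union>i<I. rtrans (W (nidx i)) (fidx i)))"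
    using assms(1) inc \<open>0 \<le> \<alpha>\<close> by (intro mult_left_mono) (simp_all add: C_filling_def)
  finally show ?thesis .
qed

theorem lemma3p1:
  fixes W :: "nat \<Rightarrow> 'a::group_add set" and C \<alpha> :: real
    and E :: "'a set" and n :: "'a \<Rightarrow> nat"
  assumes "C_filling W C" and "0 < C"
    and "finite E" and "E \<noteq> {}"
    and "\<forall>f\<in>E. real (card (rtrans (W (n f)) f \<inter> E)) / real (card (W (n f))) \<le> \<alpha>"
  shows "real (card E) / real (card (\<Union>f\<in>E. rtrans (W (n f)) f)) \<le> \<alpha> / C"
proof -
  let ?U = "\<Union>f\<in>E. rtrans (W (n f)) f"
  have finW: "\<And>m. finite (W m)" and W0: "\<forall>m. 0 \<in> W m"
    using assms(1) by (auto simp: C_filling_def)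
  note card_W_pos = C_filling_card_pos[OF assms(1)]
  have dens: "real (card (rtrans (W (n f)) f \<inter> E)) \<le> \<alpha> * real (card (W (n f)))" if "f \<in> E" for f
    using assms(5) that card_W_pos by (simp add: pos_divide_le_eq mult.commute)
  have "0 \<le> \<alpha>"
  proof -
    obtain f where "f \<in> E" using assms(4) by blast
    then have "0 \<le> \<alpha> * real (card (W (n f)))" using dens of_nat_0_le_iff order_trans by blast
    then show ?thesis using card_W_pos[of "n f"] by (simp add: zero_le_mult_iff)
  qed
  obtain I nidx fidx where inc: "incremental W I nidx fidx"
    and sel: "\<forall>i<I. fidx i \<in> E \<and> nidx i = n (fidx i)"
    and cov: "E \<subseteq> (\<Union>i<I. rtrans (W (nidx i)) (fidx i))"
    using incremental_cover[OF W0 assms(3)] by blast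
  have "C * real (card E) \<le> \<alpha> * real (card (\<Union>i<I. rtrans (W (nidx i)) (fidx i)))"
    using card_le_filling_union[OF assms(1,2) \<open>0 \<le> \<alpha>\<close> inc assms(3) cov] sel dens by simp
  also have "\<dots> \<le> \<alpha> * real (card ?U)"
  proof -
    have "(\<Union>i<I. rtrans (W (nidx i)) (fidx i)) \<subseteq> ?U" using sel by auto
    then have "card (\<Union>i<I. rtrans (W (nidx i)) (fidx i)) \<le> card ?U"
      using assms(3) finW by (intro card_mono) (auto simp: finite_rtrans)
    then show ?thesis using \<open>0 \<le> \<alpha>\<close> by (simp add: mult_left_mono)
  qed
  finally have "C * real (card E) \<le> \<alpha> * real (card ?U)" .
  moreover have "0 < card ?U"
    using W0 assms(3,4) finW rtrans_self_mem by (fastforce simp: card_gt_0_iff finite_rtrans)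
  ultimately show ?thesis
    using assms(2) by (simp add: divide_le_eq pos_le_divide_eq mult.commute)
qed

end
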